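(* In the single-hop model described in the context, for every integer $k\ge 1$, $$P(SIR_1<\beta,\dots,SIR_k<\beta)\ \ge\ q^k,\qquad\text{where } q:=P(SIR_1<\beta).$$
   Context: Single-hop model. Fix $\alpha>2$, $\beta>0$, $d>0$, $p\in(0,1]$, $\lambda>0$. Let $\Phi$ be a homogeneous Poisson point process on $\mathbb{R}^2$ of intensity $\lambda$ (the same realization in every time slot). For each time slot $t\in\{1,2,\dots\}$ and each $x\in\Phi$ let $\mathbf 1_{x,t}\sim\mathrm{Bernoulli}(p)$, $G_{x,t}\sim\mathrm{Exp}(1)$, $H_t\sim\mathrm{Exp}(1)$, all mutually independent and independent of $\Phi$. Define $SIR_t:=\dfrac{d^{-\alpha}H_t}{\sum_{x\in\Phi}\mathbf 1_{x,t}|x|^{-\alpha}G_{x,t}}$. *)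

theory Defs
  imports "HOL-Probability.Probability"
begin

text \<open>The points of the Poisson point process Phi are enumerated by a random sequence
  X :: nat => omega => real^2 (the labelling plays no role: marks are attached to labels and
  are independent of the labelling).\<close>

definition pp_count :: "(nat \<Rightarrow> 'a \<Rightarrow> real^2) \<Rightarrow> (real^2) set \<Rightarrow> 'a \<Rightarrow> nat" where
  "pp_count X B \<omega> = card {n. X n \<omega> \<in> B}"

definition poisson_pp :: "'a measure \<Rightarrow> real \<Rightarrow> (nat \<Rightarrow> 'a \<Rightarrow> real^2) \<Rightarrow> bool" where
  "poisson_pp M lam X \<longleftrightarrow>
     (\<forall>n. X n \<in> borel_measurable M) \<and>
     (\<forall>B. B \<in> sets borel \<and> bounded B \<longrightarrow>
        (\<forall>k::nat. measure M {\<omega> \<in> space M. finite {n. X n \<omega> \<in> B} \<and> pp_count X B \<omega> = k}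
            = (lam * measure lborel B) ^ k / fact k * exp (- (lam * measure lborel B)))) \<and>
     (\<forall>(Bs :: nat \<Rightarrow> (real^2) set) m.
        (\<forall>i<m. Bs i \<in> sets borel \<and> bounded (Bs i)) \<and> disjoint_family_on Bs {..<m} \<longrightarrow>
        prob_space.indep_vars M (\<lambda>_. count_space UNIV) (\<lambda>i \<omega>. pp_count X (Bs i) \<omega>) {..<m})"

text \<open>All marks collected in one real-valued family: Bernoulli indicators Ind n t (for point n,
  slot t), fadings G n t, and the direct-link fading H t.\<close>

definition marks :: "(nat \<Rightarrow> nat \<Rightarrow> 'a \<Rightarrow> real) \<Rightarrow> (nat \<Rightarrow> nat \<Rightarrow> 'a \<Rightarrow> real) \<Rightarrow> (nat \<Rightarrow> 'a \<Rightarrow> real)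
    \<Rightarrow> ((nat \<times> nat) + ((nat \<times> nat) + nat)) \<Rightarrow> 'a \<Rightarrow> real" where
  "marks Ind G H i \<omega> = (case i of Inl (n, t) \<Rightarrow> Ind n t \<omega>
                                 | Inr (Inl (n, t)) \<Rightarrow> G n t \<omega>
                                 | Inr (Inr t) \<Rightarrow> H t \<omega>)"

text \<open>Interference in slot t (as an extended nonnegative real, possibly infinite) and the SIR
  in ennreal (so S/0 = infinity for S > 0 and S/infinity = 0).\<close>

definition interference :: "real \<Rightarrow> (nat \<Rightarrow> 'a \<Rightarrow> real^2) \<Rightarrow> (nat \<Rightarrow> nat \<Rightarrow> 'a \<Rightarrow> real)
    \<Rightarrow> (nat \<Rightarrow> nat \<Rightarrow> 'a \<Rightarrow> real) \<Rightarrow> nat \<Rightarrow> 'a \<Rightarrow> ennreal" where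
  "interference \<alpha> X Ind G t \<omega> = (\<Sum>n. ennreal (Ind n t \<omega> * norm (X n \<omega>) powr (- \<alpha>) * G n t \<omega>))"

definition SIR :: "real \<Rightarrow> real \<Rightarrow> (nat \<Rightarrow> 'a \<Rightarrow> real^2) \<Rightarrow> (nat \<Rightarrow> nat \<Rightarrow> 'a \<Rightarrow> real)
    \<Rightarrow> (nat \<Rightarrow> nat \<Rightarrow> 'a \<Rightarrow> real) \<Rightarrow> (nat \<Rightarrow> 'a \<Rightarrow> real) \<Rightarrow> nat \<Rightarrow> 'a \<Rightarrow> ennreal" where
  "SIR \<alpha> d X Ind G H t \<omega> = ennreal (d powr (- \<alpha>) * H t \<omega>) / interference \<alpha> X Ind G t \<omega>"

end

theory Submission
  imports Defs
begin

(* Given the point process, the slots are independent and identically distributed: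
   slot t only uses the marks (Ind n t, G n t, H t), and these mark vectors are
   independent of each other, of the points, and have a common law nu.  Writing Y for
   the configuration of points and W t for the mark vector of slot t, the event
   "SIR_t < beta" is {(Y, W t) in A} for one fixed measurable set A, so
     P(for all t in T. (Y, W t) in A) = E[g(Y) ^ card T],   g(y) = nu(A_y),
   where A_y is the section of A at y.  Jensen's inequality for the convex function
   x ^ k on [0, 1] gives E[g(Y) ^ k] >= E[g(Y)] ^ k = q ^ k.

   Finally it identifies the single-hop model with this setting. *)

(* The power function x ^ k lies above its tangent line at any c >= 0 (Bernoulli's
   inequality); this is the convexity needed for Jensen's inequality below. *)
lemma power_ge_tangent:
  fixes x c :: real
  assumes "0 \<le> x" "0 \<le> c"
  shows "c ^ k + real k * c ^ (k - 1) * (x - c) \<le> x ^ k"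
proof (cases "c = 0")
  case True
  then show ?thesis using assms by (cases k) (auto simp: power_0_left)
next
  case False
  with assms have c: "c > 0" by simp
  have "c ^ k + real k * c ^ (k - 1) * (x - c) = c ^ k * (1 + real k * (x / c - 1))"
    using c by (cases k) (simp_all add: field_simps)
  also have "\<dots> \<le> c ^ k * (1 + (x / c - 1)) ^ k"
    using assms c by (intro mult_left_mono Bernoulli_inequality) auto
  also have "\<dots> = x ^ k"
    using c by (simp add: power_divide)
  finally show ?thesis .
qed

(* Jensen's inequality for k-th powers of a random variable with values in [0, 1],
   obtained by integrating the tangent-line bound at c = E g. *)
lemma (in prob_space) power_expectation_le:
  fixes g :: "'a \<Rightarrow> real"
  assumes g: "g \<in> borel_measurable M"
    and bounds: "\<And>x. x \<in> space M \<Longrightarrow> 0 \<le> g x \<and> g x \<le> 1"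
  shows "(expectation g) ^ k \<le> expectation (\<lambda>x. g x ^ k)"
proof -
  define c where "c = expectation g"
  have int_g: "integrable M g"
    by (rule integrable_const_bound[where B=1], rule AE_I2) (use g bounds in auto)
  have int_gk: "integrable M (\<lambda>x. g x ^ k)"
    by (rule integrable_const_bound[where B=1], rule AE_I2) (use g bounds in \<open>auto intro: power_le_one\<close>)
  have "c \<ge> 0"
    unfolding c_def using bounds by (intro integral_nonneg_AE AE_I2) auto
  have "c ^ k = expectation (\<lambda>x. c ^ k + real k * c ^ (k - 1) * (g x - c))"
    using int_g by (simp add: c_def prob_space)
  also have "\<dots> \<le> expectation (\<lambda>x. g x ^ k)"
    using int_g int_gk \<open>c \<ge> 0\<close> bounds by (intro integral_mono power_ge_tangent) auto
  finally show ?thesis unfolding c_def .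
qed

lemma measurable_measure_Pair:
  assumes "prob_space \<nu>" and "A \<in> sets (\<mu> \<Otimes>\<^sub>M \<nu>)"
  shows "(\<lambda>y. measure \<nu> (Pair y -` A)) \<in> borel_measurable \<mu>"
  using sigma_finite_measure.measurable_emeasure_Pair[OF prob_space_imp_sigma_finite[OF assms(1)] assms(2)]
  unfolding measure_def by measurable

lemma measure_pair_PiM_all_sections:
  fixes \<mu> :: "'a measure" and \<nu> :: "'b measure"
  assumes "prob_space \<mu>" "prob_space \<nu>" "finite T"
    and A: "A \<in> sets (\<mu> \<Otimes>\<^sub>M \<nu>)"
  defines "P \<equiv> \<mu> \<Otimes>\<^sub>M PiM T (\<lambda>_. \<nu>)"
  shows "{p \<in> space P. \<forall>t\<in>T. (fst p, snd p t) \<in> A} \<in> sets P"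
    and "measure P {p \<in> space P. \<forall>t\<in>T. (fst p, snd p t) \<in> A}
       = (\<integral>y. measure \<nu> (Pair y -` A) ^ card T \<partial>\<mu>)"
proof -
  interpret mu: prob_space \<mu> by fact
  interpret nu: prob_space \<nu> by fact
  interpret Pi: product_prob_space "\<lambda>_. \<nu>" T by unfold_locales
  interpret Pi: prob_space "PiM T (\<lambda>_. \<nu>)" by (rule prob_space_PiM) (rule nu.prob_space_axioms)
  define S where "S = {p \<in> space P. \<forall>t\<in>T. (fst p, snd p t) \<in> A}"
  show S: "S \<in> sets P"
    unfolding S_def
  proof (rule sets.sets_Collect_finite_All[OF _ \<open>finite T\<close>])
    fix t assume "t \<in> T"
    then have "(\<lambda>p. (fst p, snd p t)) \<in> measurable P (\<mu> \<Otimes>\<^sub>M \<nu>)"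
      unfolding P_def by measurable
    then show "{p \<in> space P. (fst p, snd p t) \<in> A} \<in> sets P"
      using A by measurable
  qed
  have slice: "Pair y -` S = PiE T (\<lambda>_. Pair y -` A)" if "y \<in> space \<mu>" for y
    using that sets.sets_into_space[OF A]
    by (auto simp: S_def P_def space_pair_measure space_PiM PiE_iff extensional_def)
  have "emeasure P S = (\<integral>\<^sup>+y. emeasure (PiM T (\<lambda>_. \<nu>)) (Pair y -` S) \<partial>\<mu>)"
    unfolding P_def by (rule Pi.emeasure_pair_measure_alt) (use S in \<open>simp add: P_def\<close>)
  also have "\<dots> = (\<integral>\<^sup>+y. ennreal (measure \<nu> (Pair y -` A) ^ card T) \<partial>\<mu>)"
    using A \<open>finite T\<close>
    by (intro nn_integral_cong)
       (simp add: slice Pi.emeasure_PiM sets_Pair1 nu.emeasure_eq_measure prod_ennreal ennreal_power)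
  also have "\<dots> = ennreal (\<integral>y. measure \<nu> (Pair y -` A) ^ card T \<partial>\<mu>)"
    using measurable_measure_Pair[OF \<open>prob_space \<nu>\<close> A]
    by (intro nn_integral_eq_integral mu.integrable_const_bound[where B=1] AE_I2)
      (auto intro: power_le_one)
  finally show "measure P S = (\<integral>y. measure \<nu> (Pair y -` A) ^ card T \<partial>\<mu>)"
    by (simp add: measure_def integral_nonneg_AE)
qed

definition vimage_events :: "'a measure \<Rightarrow> 'b measure \<Rightarrow> ('a \<Rightarrow> 'b) \<Rightarrow> 'a set set" where
  "vimage_events M N X = {X -` B \<inter> space M | B. B \<in> sets N}"

lemma (in prob_space) indep_set_vimage_events_compose:
  assumes indep: "indep_set (vimage_events M S X) (vimage_events M T Y)"
    and Y: "random_variable T Y" and h: "h \<in> measurable T N"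
  shows "indep_set (vimage_events M S X) (vimage_events M N (\<lambda>\<omega>. h (Y \<omega>)))"
proof -
  have "(\<lambda>\<omega>. h (Y \<omega>)) -` B \<inter> space M = Y -` (h -` B \<inter> space T) \<inter> space M" for B
    using measurable_space[OF Y] by auto
  then have "vimage_events M N (\<lambda>\<omega>. h (Y \<omega>)) \<subseteq> vimage_events M T Y"
    using measurable_sets[OF h] unfolding vimage_events_def by blast
  then show ?thesis
    using indep unfolding indep_sets2_eq by blast
qed

lemma (in prob_space) distr_pair_eq_pair_measure:
  assumes X: "random_variable S X" and Y: "random_variable T Y"
    and indep: "indep_set (vimage_events M S X) (vimage_events M T Y)"
  shows "distr M (S \<Otimes>\<^sub>M T) (\<lambda>\<omega>. (X \<omega>, Y \<omega>)) = distr M S X \<Otimes>\<^sub>M distr M T Y"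
proof (rule pair_measure_eqI[symmetric])
  show "sigma_finite_measure (distr M S X)" "sigma_finite_measure (distr M T Y)"
    using X Y by (auto intro!: prob_space_imp_sigma_finite prob_space_distr)
  fix a b assume "a \<in> sets (distr M S X)" "b \<in> sets (distr M T Y)"
  then have a: "a \<in> sets S" and b: "b \<in> sets T" by simp_all
  have "emeasure (distr M S X) a * emeasure (distr M T Y) b
      = ennreal (prob (X -` a \<inter> space M) * prob (Y -` b \<inter> space M))"
    using X Y a b by (simp add: emeasure_distr emeasure_eq_measure ennreal_mult)
  also have "\<dots> = ennreal (prob ((X -` a \<inter> space M) \<inter> (Y -` b \<inter> space M)))"
  proof -
    have "X -` a \<inter> space M \<in> vimage_events M S X" "Y -` b \<inter> space M \<in> vimage_events M T Y"
      using a b unfolding vimage_events_def by auto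
    then show ?thesis using indep unfolding indep_sets2_eq by simp
  qed
  also have "(X -` a \<inter> space M) \<inter> (Y -` b \<inter> space M) = (\<lambda>\<omega>. (X \<omega>, Y \<omega>)) -` (a \<times> b) \<inter> space M"
    by auto
  also have "ennreal (prob \<dots>) = emeasure (distr M (S \<Otimes>\<^sub>M T) (\<lambda>\<omega>. (X \<omega>, Y \<omega>))) (a \<times> b)"
    using X Y a b by (simp add: emeasure_distr emeasure_eq_measure)
  finally show "emeasure (distr M S X) a * emeasure (distr M T Y) b
      = emeasure (distr M (S \<Otimes>\<^sub>M T) (\<lambda>\<omega>. (X \<omega>, Y \<omega>))) (a \<times> b)" .
qed (simp only: sets_distr sets_pair_measure_cong[OF sets_distr sets_distr])

lemma (in prob_space) prob_all_slots_eq_integral_power: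
  assumes T: "finite T" "T \<noteq> {}"
    and Y: "random_variable SY Y"
    and indep_Y: "indep_set (vimage_events M SY Y) (vimage_events M (PiM T (\<lambda>_. SW)) (\<lambda>\<omega>. \<lambda>t\<in>T. W t \<omega>))"
    and indep_W: "indep_vars (\<lambda>_. SW) W T"
    and law: "\<And>t. t \<in> T \<Longrightarrow> distr M SW (W t) = \<nu>"
    and A: "A \<in> sets (SY \<Otimes>\<^sub>M SW)"
  shows "prob {\<omega> \<in> space M. \<forall>t\<in>T. (Y \<omega>, W t \<omega>) \<in> A}
       = (\<integral>y. measure \<nu> (Pair y -` A) ^ card T \<partial>distr M SY Y)"
proof -
  define V where "V = (\<lambda>\<omega>. \<lambda>t\<in>T. W t \<omega>)"
  define \<mu> where "\<mu> = distr M SY Y"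
  define P where "P = \<mu> \<Otimes>\<^sub>M PiM T (\<lambda>_. \<nu>)"
  obtain t0 where "t0 \<in> T" using T by auto
  have W: "\<And>t. t \<in> T \<Longrightarrow> random_variable SW (W t)"
    using indep_W by (simp add: indep_vars_def)
  then have V: "random_variable (PiM T (\<lambda>_. SW)) V"
    unfolding V_def by (intro measurable_restrict)
  have sets_\<nu>: "sets \<nu> = sets SW" using law[OF \<open>t0 \<in> T\<close>] by auto
  have "prob_space \<nu>" using law[OF \<open>t0 \<in> T\<close>] W[OF \<open>t0 \<in> T\<close>] by (metis prob_space_distr)
  have law_V: "distr M (PiM T (\<lambda>_. SW)) V = PiM T (\<lambda>_. \<nu>)"
    using indep_vars_iff_distr_eq_PiM'[of T W "\<lambda>_. SW"] T W indep_W law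
    unfolding V_def by (auto intro: PiM_cong)
  have joint: "distr M (SY \<Otimes>\<^sub>M PiM T (\<lambda>_. SW)) (\<lambda>\<omega>. (Y \<omega>, V \<omega>)) = P"
    using distr_pair_eq_pair_measure[OF Y V indep_Y[folded V_def]]
    unfolding P_def \<mu>_def law_V by simp
  have sets_P: "sets P = sets (SY \<Otimes>\<^sub>M PiM T (\<lambda>_. SW))"
    unfolding P_def \<mu>_def by (intro sets_pair_measure_cong sets_PiM_cong) (auto simp: sets_\<nu>)
  then have space_P: "space P = space SY \<times> space (PiM T (\<lambda>_. SW))"
    by (auto dest: sets_eq_imp_space_eq simp: space_pair_measure)
  have "prob_space \<mu>" unfolding \<mu>_def using Y by (rule prob_space_distr)
  have "A \<in> sets (\<mu> \<Otimes>\<^sub>M \<nu>)"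
    using A unfolding \<mu>_def by (simp add: sets_pair_measure_cong[OF _ sets_\<nu>])
  note slots = measure_pair_PiM_all_sections[OF \<open>prob_space \<mu>\<close> \<open>prob_space \<nu>\<close> \<open>finite T\<close> this,
      folded P_def]
  have event: "{\<omega> \<in> space M. \<forall>t\<in>T. (Y \<omega>, W t \<omega>) \<in> A}
      = (\<lambda>\<omega>. (Y \<omega>, V \<omega>)) -` {p \<in> space P. \<forall>t\<in>T. (fst p, snd p t) \<in> A} \<inter> space M"
    using measurable_space[OF Y] measurable_space[OF V] unfolding space_P V_def by auto
  have "prob {\<omega> \<in> space M. \<forall>t\<in>T. (Y \<omega>, W t \<omega>) \<in> A}
      = measure P {p \<in> space P. \<forall>t\<in>T. (fst p, snd p t) \<in> A}"
    unfolding event joint[symmetric] using Y V slots(1)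
    by (subst measure_distr) (auto simp: joint sets_P)
  then show ?thesis unfolding slots(2) \<mu>_def .
qed

(* The single-slot probability
   is the case T = {t0}, and Jensen compares the two integrals. *)
lemma (in prob_space) prob_all_slots_ge_power:
  assumes T: "finite T" "t0 \<in> T"
    and Y: "random_variable SY Y"
    and indep_Y: "indep_set (vimage_events M SY Y) (vimage_events M (PiM T (\<lambda>_. SW)) (\<lambda>\<omega>. \<lambda>t\<in>T. W t \<omega>))"
    and indep_W: "indep_vars (\<lambda>_. SW) W T"
    and law: "\<And>t. t \<in> T \<Longrightarrow> distr M SW (W t) = \<nu>"
    and A: "A \<in> sets (SY \<Otimes>\<^sub>M SW)"
  shows "prob {\<omega> \<in> space M. \<forall>t\<in>T. (Y \<omega>, W t \<omega>) \<in> A}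
       \<ge> prob {\<omega> \<in> space M. (Y \<omega>, W t0 \<omega>) \<in> A} ^ card T"
proof -
  define g where "g = (\<lambda>y. measure \<nu> (Pair y -` A))"
  have "random_variable (PiM T (\<lambda>_. SW)) (\<lambda>\<omega>. \<lambda>t\<in>T. W t \<omega>)"
    using indep_W unfolding indep_vars_def by (intro measurable_restrict) simp
  note restricted = indep_set_vimage_events_compose[OF indep_Y this measurable_restrict_subset[of "{t0}" T]]
  have "(\<lambda>\<omega>. restrict (\<lambda>t\<in>T. W t \<omega>) {t0}) = (\<lambda>\<omega>. \<lambda>t\<in>{t0}. W t \<omega>)"
    using \<open>t0 \<in> T\<close> by (auto simp: fun_eq_iff)
  with restricted have indep_Y0: "indep_set (vimage_events M SY Y) (vimage_events M (PiM {t0} (\<lambda>_. SW)) (\<lambda>\<omega>. \<lambda>t\<in>{t0}. W t \<omega>))"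
    using \<open>t0 \<in> T\<close> by simp
  have single: "prob {\<omega> \<in> space M. (Y \<omega>, W t0 \<omega>) \<in> A} = (\<integral>y. g y \<partial>distr M SY Y)"
  proof -
    have "indep_vars (\<lambda>_. SW) W {t0}" using indep_vars_subset[OF indep_W] T by simp
    moreover have "\<And>t. t \<in> {t0} \<Longrightarrow> distr M SW (W t) = \<nu>" using law T by simp
    ultimately show ?thesis
      using prob_all_slots_eq_integral_power[OF _ _ Y indep_Y0 _ _ A] by (simp add: g_def)
  qed
  have all: "prob {\<omega> \<in> space M. \<forall>t\<in>T. (Y \<omega>, W t \<omega>) \<in> A} = (\<integral>y. g y ^ card T \<partial>distr M SY Y)"
    using prob_all_slots_eq_integral_power[OF _ _ Y indep_Y indep_W law A] T
    by (auto simp: g_def)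
  have "prob_space \<nu>" and sets_\<nu>: "sets \<nu> = sets SW"
    using law[OF \<open>t0 \<in> T\<close>] indep_W \<open>t0 \<in> T\<close>
    by (auto simp: indep_vars_def intro: prob_space_distr)
  then have "g \<in> borel_measurable (distr M SY Y)"
    unfolding g_def using A
    by (intro measurable_measure_Pair) (simp_all add: sets_pair_measure_cong[OF _ sets_\<nu>])
  moreover have "0 \<le> g y \<and> g y \<le> 1" for y
    unfolding g_def using prob_space.prob_le_1[OF \<open>prob_space \<nu>\<close>] by simp
  ultimately show ?thesis
    unfolding single all by (intro prob_space.power_expectation_le prob_space_distr[OF Y])
qed

lemma (in prob_space) indep_vars_blocks:
  assumes indep: "indep_vars (\<lambda>_. N) Z UNIV"
    and disjoint: "\<And>s t i j. f s i = f t j \<Longrightarrow> s = t"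
  shows "indep_vars (\<lambda>_. PiM UNIV (\<lambda>_. N)) (\<lambda>t \<omega>. \<lambda>j. Z (f t j) \<omega>) T"
proof -
  have "indep_vars (\<lambda>t. PiM (range (f t)) (\<lambda>_. N)) (\<lambda>t \<omega>. restrict (\<lambda>i. Z i \<omega>) (range (f t))) T"
    using disjoint by (intro indep_vars_restrict[OF indep]) (auto simp: disjoint_family_on_def)
  then have "indep_vars (\<lambda>_. PiM UNIV (\<lambda>_. N))
      (\<lambda>t. (\<lambda>z j. z (f t j)) \<circ> (\<lambda>\<omega>. restrict (\<lambda>i. Z i \<omega>) (range (f t)))) T"
  proof (rule indep_vars_compose)
    fix t
    show "(\<lambda>z j. z (f t j)) \<in> measurable (PiM (range (f t)) (\<lambda>_. N)) (PiM UNIV (\<lambda>_. N))"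
      by (rule measurable_PiM_single') (auto simp: space_PiM)
  qed
  then show ?thesis by (simp add: comp_def)
qed

lemma (in prob_space) distr_block_eq_PiM:
  assumes indep: "indep_vars (\<lambda>_. N) Z UNIV" and "inj f"
  shows "distr M (PiM UNIV (\<lambda>_. N)) (\<lambda>\<omega>. \<lambda>j. Z (f j) \<omega>) = PiM UNIV (\<lambda>j. distr M N (Z (f j)))"
proof -
  have "indep_vars (\<lambda>j. PiM {f j} (\<lambda>_. N)) (\<lambda>j \<omega>. restrict (\<lambda>i. Z i \<omega>) {f j}) UNIV"
    using \<open>inj f\<close> by (intro indep_vars_restrict[OF indep]) (auto simp: disjoint_family_on_def inj_def)
  then have "indep_vars (\<lambda>_. N) (\<lambda>j \<omega>. (\<lambda>z. z (f j)) (restrict (\<lambda>i. Z i \<omega>) {f j})) UNIV"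
    by (rule indep_vars_compose2) measurable
  then have "indep_vars (\<lambda>_. N) (\<lambda>j. Z (f j)) UNIV"
    by simp
  moreover have "random_variable N (Z (f j))" for j
    using indep by (simp add: indep_vars_def)
  ultimately show ?thesis
    by (simp add: indep_vars_iff_distr_eq_PiM restrict_UNIV)
qed

lemma (in prob_space) prob_vimage_binary:
  fixes f :: "'a \<Rightarrow> real"
  assumes "random_variable borel f" and binary: "\<And>\<omega>. \<omega> \<in> space M \<Longrightarrow> f \<omega> \<in> {0, 1}"
  defines "E \<equiv> {\<omega> \<in> space M. f \<omega> = 1}"
  shows "prob (f -` B \<inter> space M) = (if 1 \<in> B then prob E else 0) + (if 0 \<in> B then 1 - prob E else 0)"
proof -
  have "E \<in> events" unfolding E_def using assms(1) by measurable
  have "f -` B \<inter> space M = (if 1 \<in> B then E else {}) \<union> (if 0 \<in> B then space M - E else {})"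
    using binary unfolding E_def by (auto split: if_splits) (metis)+
  then show ?thesis
    using \<open>E \<in> events\<close> prob_compl[OF \<open>E \<in> events\<close>] sets.sets_into_space[OF \<open>E \<in> events\<close>]
    by (auto simp: prob_space Un_absorb1)
qed

lemma (in prob_space) distr_binary_eq:
  fixes f g :: "'a \<Rightarrow> real"
  assumes f: "random_variable borel f" "\<And>\<omega>. \<omega> \<in> space M \<Longrightarrow> f \<omega> \<in> {0, 1}"
    and g: "random_variable borel g" "\<And>\<omega>. \<omega> \<in> space M \<Longrightarrow> g \<omega> \<in> {0, 1}"
    and same: "prob {\<omega> \<in> space M. f \<omega> = 1} = prob {\<omega> \<in> space M. g \<omega> = 1}"
  shows "distr M borel f = distr M borel g"
  using f g same
  by (intro measure_eqI) (simp_all add: emeasure_distr emeasure_eq_measure prob_vimage_binary)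

lemma distributed_same_density_distr_eq:
  fixes X X' :: "'a \<Rightarrow> 'b::euclidean_space"
  assumes "distributed M lborel X f" and "distributed M lborel X' f"
  shows "distr M borel X = distr M borel X'"
proof -
  have "distr M borel Z = distr M lborel Z" for Z :: "'a \<Rightarrow> 'b"
    by (rule distr_cong) auto
  then show ?thesis
    using assms by (simp add: distributed_def)
qed

(* The marks of slot t, re-indexed by a slot-independent index set: Inl n is the
   activity indicator of point n, Inr (Inl n) its fading, Inr (Inr ()) the direct link. *)
definition slot :: "nat \<Rightarrow> nat + (nat + unit) \<Rightarrow> (nat \<times> nat) + ((nat \<times> nat) + nat)" where
  "slot t j = (case j of Inl n \<Rightarrow> Inl (n, t) | Inr (Inl n) \<Rightarrow> Inr (Inl (n, t)) | Inr (Inr _) \<Rightarrow> Inr (Inr t))"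

lemma slot_eq_iff: "slot s i = slot t j \<longleftrightarrow> s = t \<and> i = j"
  by (auto simp: slot_def split: sum.splits)

lemma marks_simps:
  "marks Ind G H (Inl (n, t)) = Ind n t"
  "marks Ind G H (Inr (Inl (n, t))) = G n t"
  "marks Ind G H (Inr (Inr t)) = H t"
  by (simp_all add: marks_def fun_eq_iff)

definition slot_marks :: "(nat \<Rightarrow> nat \<Rightarrow> 'a \<Rightarrow> real) \<Rightarrow> (nat \<Rightarrow> nat \<Rightarrow> 'a \<Rightarrow> real) \<Rightarrow> (nat \<Rightarrow> 'a \<Rightarrow> real)
    \<Rightarrow> nat \<Rightarrow> 'a \<Rightarrow> nat + (nat + unit) \<Rightarrow> real" where
  "slot_marks Ind G H t \<omega> = (\<lambda>j. marks Ind G H (slot t j) \<omega>)"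

definition sir_fun :: "real \<Rightarrow> real \<Rightarrow> (nat \<Rightarrow> real^2) \<times> (nat + (nat + unit) \<Rightarrow> real) \<Rightarrow> ennreal" where
  "sir_fun \<alpha> d = (\<lambda>(x, w). ennreal (d powr (- \<alpha>) * w (Inr (Inr ()))) /
     (\<Sum>n. ennreal (w (Inl n) * norm (x n) powr (- \<alpha>) * w (Inr (Inl n)))))"

lemma SIR_eq_sir_fun: "SIR \<alpha> d X Ind G H t \<omega> = sir_fun \<alpha> d (\<lambda>n. X n \<omega>, slot_marks Ind G H t \<omega>)"
  by (simp add: SIR_def interference_def sir_fun_def slot_marks_def marks_def slot_def)

lemma sir_fun_measurable:
  "sir_fun \<alpha> d \<in> borel_measurable (PiM UNIV (\<lambda>_. borel) \<Otimes>\<^sub>M PiM UNIV (\<lambda>_. borel))"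
  unfolding sir_fun_def by measurable

lemma (in prob_space) slot_marks_indep:
  assumes "indep_vars (\<lambda>_. borel) (marks Ind G H) UNIV"
  shows "indep_vars (\<lambda>_. PiM UNIV (\<lambda>_. borel)) (slot_marks Ind G H) T"
  using indep_vars_blocks[OF assms, of slot] unfolding slot_marks_def slot_eq_iff by blast

lemma (in prob_space) slot_marks_law:
  assumes indep: "indep_vars (\<lambda>_. borel) (marks Ind G H) UNIV"
    and Ind: "\<And>n t. Ind n t \<in> borel_measurable M"
      "\<And>n t \<omega>. \<omega> \<in> space M \<Longrightarrow> Ind n t \<omega> \<in> {0, 1}"
      "\<And>n t. prob {\<omega> \<in> space M. Ind n t \<omega> = 1} = p"
    and G: "\<And>n t. distributed M lborel (G n t) (exponential_density 1)"
    and H: "\<And>t. distributed M lborel (H t) (exponential_density 1)"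
  shows "distr M (PiM UNIV (\<lambda>_. borel)) (slot_marks Ind G H t)
       = distr M (PiM UNIV (\<lambda>_. borel)) (slot_marks Ind G H s)"
proof -
  have marginal: "distr M borel (marks Ind G H (slot t j)) = distr M borel (marks Ind G H (slot s j))" for j
  proof (cases j)
    case (Inl n)
    then show ?thesis
      using Ind by (simp add: slot_def marks_simps distr_binary_eq)
  next
    case (Inr j')
    then show ?thesis
      using distributed_same_density_distr_eq[OF G G] distributed_same_density_distr_eq[OF H H]
      by (cases j') (auto simp: slot_def marks_simps)
  qed
  have "inj (slot r)" for r by (auto simp: inj_def slot_eq_iff)
  then show ?thesis
    unfolding slot_marks_def[abs_def] distr_block_eq_PiM[OF indep \<open>inj (slot t)\<close>]
      distr_block_eq_PiM[OF indep \<open>inj (slot s)\<close>]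
    by (intro PiM_cong refl marginal)
qed

lemma (in prob_space) points_indep_slot_marks:
  assumes Z: "(\<lambda>\<omega> i. marks Ind G H i \<omega>) \<in> measurable M (PiM UNIV (\<lambda>_. borel))"
    and indep: "indep_set (vimage_events M SY Y) (vimage_events M (PiM UNIV (\<lambda>_. borel)) (\<lambda>\<omega> i. marks Ind G H i \<omega>))"
  shows "indep_set (vimage_events M SY Y)
           (vimage_events M (PiM T (\<lambda>_. PiM UNIV (\<lambda>_. borel))) (\<lambda>\<omega>. \<lambda>t\<in>T. slot_marks Ind G H t \<omega>))"
proof -
  define regroup :: "((nat \<times> nat) + ((nat \<times> nat) + nat) \<Rightarrow> real) \<Rightarrow> nat \<Rightarrow> nat + (nat + unit) \<Rightarrow> real"
    where "regroup = (\<lambda>z. \<lambda>t\<in>T. \<lambda>j. z (slot t j))"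
  have "(\<lambda>z j. z (slot t j)) \<in> measurable (PiM UNIV (\<lambda>_. borel)) (PiM UNIV (\<lambda>_. borel))" for t
    by (rule measurable_PiM_single') (auto simp: space_PiM)
  then have "regroup \<in> measurable (PiM UNIV (\<lambda>_. borel)) (PiM T (\<lambda>_. PiM UNIV (\<lambda>_. borel)))"
    unfolding regroup_def by (intro measurable_restrict)
  from indep_set_vimage_events_compose[OF indep Z this]
  show ?thesis by (simp add: regroup_def slot_marks_def)
qed

theorem mainTheorem3:
  fixes M :: "'a measure"
    and \<alpha> \<beta> d p lam :: real
    and X :: "nat \<Rightarrow> 'a \<Rightarrow> real^2"
    and Ind G :: "nat \<Rightarrow> nat \<Rightarrow> 'a \<Rightarrow> real"
    and H :: "nat \<Rightarrow> 'a \<Rightarrow> real"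
    and k :: nat
  assumes "prob_space M"
    and "\<alpha> > 2" and "\<beta> > 0" and "d > 0" and "0 < p" and "p \<le> 1" and "lam > 0"
    and "poisson_pp M lam X"
    and "\<And>n t. Ind n t \<in> borel_measurable M"
    and "\<And>n t \<omega>. \<omega> \<in> space M \<Longrightarrow> Ind n t \<omega> \<in> {0, 1}"
    and "\<And>n t. measure M {\<omega> \<in> space M. Ind n t \<omega> = 1} = p"
    and "\<And>n t. distributed M lborel (G n t) (exponential_density 1)"
    and "\<And>t. distributed M lborel (H t) (exponential_density 1)"
    and "prob_space.indep_vars M (\<lambda>_. borel) (marks Ind G H) UNIV"
    and "(\<lambda>\<omega> n. X n \<omega>) \<in> measurable M (PiM UNIV (\<lambda>_. borel))"
    and "(\<lambda>\<omega> i. marks Ind G H i \<omega>) \<in> measurable M (PiM UNIV (\<lambda>_. borel))"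
    and "prob_space.indep_set M
           {(\<lambda>\<omega> n. X n \<omega>) -` A \<inter> space M | A. A \<in> sets (PiM UNIV (\<lambda>_. borel))}
           {(\<lambda>\<omega> i. marks Ind G H i \<omega>) -` A \<inter> space M | A. A \<in> sets (PiM UNIV (\<lambda>_. borel))}"
    and "k \<ge> 1"
  shows "measure M {\<omega> \<in> space M. \<forall>t\<in>{1..k}. SIR \<alpha> d X Ind G H t \<omega> < ennreal \<beta>}
           \<ge> (measure M {\<omega> \<in> space M. SIR \<alpha> d X Ind G H 1 \<omega> < ennreal \<beta>}) ^ k"
proof -
  interpret prob_space M by fact
  define SY :: "(nat \<Rightarrow> real^2) measure" where "SY = PiM UNIV (\<lambda>_. borel)"
  define SW :: "(nat + (nat + unit) \<Rightarrow> real) measure" where "SW = PiM UNIV (\<lambda>_. borel)"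
  define Y where "Y = (\<lambda>\<omega> n. X n \<omega>)"
  define A where "A = {p \<in> space (SY \<Otimes>\<^sub>M SW). sir_fun \<alpha> d p < ennreal \<beta>}"
  have A: "A \<in> sets (SY \<Otimes>\<^sub>M SW)"
    unfolding A_def SY_def SW_def using sir_fun_measurable by measurable
  have event: "{\<omega> \<in> space M. \<forall>t\<in>T. SIR \<alpha> d X Ind G H t \<omega> < ennreal \<beta>}
      = {\<omega> \<in> space M. \<forall>t\<in>T. (Y \<omega>, slot_marks Ind G H t \<omega>) \<in> A}" for T
    by (simp add: A_def Y_def SY_def SW_def SIR_eq_sir_fun space_pair_measure space_PiM)
  have "prob {\<omega> \<in> space M. \<forall>t\<in>{1..k}. (Y \<omega>, slot_marks Ind G H t \<omega>) \<in> A}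
      \<ge> prob {\<omega> \<in> space M. (Y \<omega>, slot_marks Ind G H 1 \<omega>) \<in> A} ^ card {1..k}"
  proof (rule prob_all_slots_ge_power[where \<nu>="distr M SW (slot_marks Ind G H 1)"])
    show "indep_set (vimage_events M SY Y)
        (vimage_events M (PiM {1..k} (\<lambda>_. SW)) (\<lambda>\<omega>. \<lambda>t\<in>{1..k}. slot_marks Ind G H t \<omega>))"
      using assms(16,17) unfolding SY_def SW_def Y_def
      by (intro points_indep_slot_marks) (simp_all add: vimage_events_def)
    show "indep_vars (\<lambda>_. SW) (slot_marks Ind G H) {1..k}"
      unfolding SW_def using assms(14) by (rule slot_marks_indep)
    show "distr M SW (slot_marks Ind G H t) = distr M SW (slot_marks Ind G H 1)" for t
      unfolding SW_def using assms(9-14) by (intro slot_marks_law) auto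
  qed (use A assms(15,18) in \<open>simp_all add: Y_def SY_def\<close>)
  then show ?thesis
    using event[of "{1..k}"] event[of "{1}"] by simp
qed

end
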